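(* Let $(X,d)$ be a reflexive Busemann convex geodesic metric space and let $A,B\subseteq X$ be nonempty, closed and convex, with $A$ bounded. Let $T:A\cup B\to A\cup B$ be a cyclic relatively nonexpansive mapping, and suppose the pair $(A,B)$ has proximal normal structure. Then there exists $(x,y)\in A\times B$ such that $d(x,Tx)=d(y,Ty)=\operatorname{dist}(A,B)$.
   Context: $\operatorname{dist}(A,B)=\inf\{d(x,y):x\in A,y\in B\}$, $\delta(x,A)=\sup\{d(x,y):y\in A\}$, $\delta(A,B)=\sup\{d(x,y):x\in A,y\in B\}$. A geodesic space is one in which any two points are joined by a geodesic segment; a subset is convex if it contains every geodesic segment joining two of its points. $X$ is Busemann convex if for any geodesics $c_1:[0,l_1]\to X$, $c_2:[0,l_2]\to X$, $d(c_1(tl_1),c_2(tl_2))\le (1-t)d(c_1(0),c_2(0))+t\,d(c_1(l_1),c_2(l_2))$ for all $t\in[0,1]$. $X$ is reflexive if every decreasing chain of nonempty closed convex bounded subsets has nonempty intersection. $T$ is relatively nonexpansive if $d(Tx,Ty)\le d(x,y)$ for all $x\in A$, $y\in B$; it is cyclic if $T(A)\subseteq B$ and $T(B)\subseteq A$. A pair $(H_1,H_2)$ is proximal if for every $(a,b)\in H_1\times H_2$ there is $(a',b')\in H_1\times H_2$ with $d(a,b')=d(a',b)=\operatorname{dist}(H_1,H_2)$. A convex pair $(K_1,K_2)$ has proximal normal structure if for every closed bounded convex proximal pair $(H_1,H_2)$ with $H_1\subseteq K_1$, $H_2\subseteq K_2$, $\operatorname{dist}(H_1,H_2)=\operatorname{dist}(K_1,K_2)$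 and $\delta(H_1,H_2)>\operatorname{dist}(H_1,H_2)$, there exists $(x_1,x_2)\in H_1\times H_2$ with $\delta(x_1,H_2)<\delta(H_1,H_2)$ and $\delta(x_2,H_1)<\delta(H_1,H_2)$. *)

theory Defs
  imports "HOL-Analysis.Analysis"
begin

text \<open>The metric space X is the whole type 'a (class metric_space).
  dist(A,B) is the library's setdist (infimum of distances for nonempty sets).\<close>

definition geodesic_path :: "(real \<Rightarrow> 'a::metric_space) \<Rightarrow> real \<Rightarrow> bool" where
  "geodesic_path c l \<longleftrightarrow> 0 \<le> l \<and>
     (\<forall>s\<in>{0..l}. \<forall>t\<in>{0..l}. dist (c s) (c t) = \<bar>s - t\<bar>)"

definition geodesic_joining :: "(real \<Rightarrow> 'a::metric_space) \<Rightarrow> real \<Rightarrow> 'a \<Rightarrow> 'a \<Rightarrow> bool" where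
  "geodesic_joining c l x y \<longleftrightarrow> geodesic_path c l \<and> c 0 = x \<and> c l = y"

definition geodesic_space :: "'a::metric_space itself \<Rightarrow> bool" where
  "geodesic_space (_::'a itself) \<longleftrightarrow>
     (\<forall>x y::'a. \<exists>c l. geodesic_joining c l x y)"

definition geo_convex :: "'a::metric_space set \<Rightarrow> bool" where
  "geo_convex C \<longleftrightarrow>
     (\<forall>x\<in>C. \<forall>y\<in>C. \<forall>c l. geodesic_joining c l x y \<longrightarrow> c ` {0..l} \<subseteq> C)"

definition busemann_convex :: "'a::metric_space itself \<Rightarrow> bool" where
  "busemann_convex (_::'a itself) \<longleftrightarrow>
     (\<forall>(c1::real \<Rightarrow> 'a) l1 (c2::real \<Rightarrow> 'a) l2 t.
        geodesic_path c1 l1 \<longrightarrow> geodesic_path c2 l2 \<longrightarrow> t \<in> {0..1} \<longrightarrow>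
        dist (c1 (t * l1)) (c2 (t * l2))
          \<le> (1 - t) * dist (c1 0) (c2 0) + t * dist (c1 l1) (c2 l2))"

definition reflexive_space :: "'a::metric_space itself \<Rightarrow> bool" where
  "reflexive_space (_::'a itself) \<longleftrightarrow>
     (\<forall>\<F>::'a set set. \<F> \<noteq> {} \<longrightarrow>
        (\<forall>S\<in>\<F>. S \<noteq> {} \<and> closed S \<and> geo_convex S \<and> bounded S) \<longrightarrow>
        (\<forall>S\<in>\<F>. \<forall>S'\<in>\<F>. S \<subseteq> S' \<or> S' \<subseteq> S) \<longrightarrow>
        \<Inter>\<F> \<noteq> {})"

definition delta_pt :: "'a::metric_space \<Rightarrow> 'a set \<Rightarrow> real" where
  "delta_pt x A = (SUP y\<in>A. dist x y)"

definition delta_set :: "'a::metric_space set \<Rightarrow> 'a set \<Rightarrow> real" where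
  "delta_set A B = (SUP p\<in>A \<times> B. dist (fst p) (snd p))"

definition relatively_nonexpansive :: "('a::metric_space \<Rightarrow> 'a) \<Rightarrow> 'a set \<Rightarrow> 'a set \<Rightarrow> bool" where
  "relatively_nonexpansive T A B \<longleftrightarrow> (\<forall>x\<in>A. \<forall>y\<in>B. dist (T x) (T y) \<le> dist x y)"

definition cyclic_map :: "('a \<Rightarrow> 'a) \<Rightarrow> 'a set \<Rightarrow> 'a set \<Rightarrow> bool" where
  "cyclic_map T A B \<longleftrightarrow> T ` A \<subseteq> B \<and> T ` B \<subseteq> A"

definition proximal_pair :: "'a::metric_space set \<Rightarrow> 'a set \<Rightarrow> bool" where
  "proximal_pair H1 H2 \<longleftrightarrow>
     (\<forall>a\<in>H1. \<forall>b\<in>H2. \<exists>a'\<in>H1. \<exists>b'\<in>H2.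
        dist a b' = setdist H1 H2 \<and> dist a' b = setdist H1 H2)"

definition proximal_normal_structure :: "'a::metric_space set \<Rightarrow> 'a set \<Rightarrow> bool" where
  "proximal_normal_structure K1 K2 \<longleftrightarrow>
     (\<forall>H1 H2. H1 \<noteq> {} \<and> H2 \<noteq> {} \<and> closed H1 \<and> closed H2 \<and> bounded H1 \<and> bounded H2 \<and>
        geo_convex H1 \<and> geo_convex H2 \<and> proximal_pair H1 H2 \<and>
        H1 \<subseteq> K1 \<and> H2 \<subseteq> K2 \<and> setdist H1 H2 = setdist K1 K2 \<and>
        delta_set H1 H2 > setdist H1 H2 \<longrightarrow>
        (\<exists>x1\<in>H1. \<exists>x2\<in>H2. delta_pt x1 H2 < delta_set H1 H2 \<and> delta_pt x2 H1 < delta_set H1 H2))"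

end

theory Submission
  imports Defs
begin

text \<open>By Zorn's lemma, with reflexivity bounding chains from below, there is a minimal pair \<open>(K, L)\<close>
  of nonempty closed convex bounded sets with \<open>K \<subseteq> A\<close>, \<open>L \<subseteq> B\<close>, \<open>T ` K \<subseteq> L\<close>, \<open>T ` L \<subseteq> K\<close>
  and containing a pair at distance \<open>D = dist(A,B)\<close>. Minimality makes \<open>K\<close> the least closed convex
  set containing \<open>T ` L\<close> (and vice versa), so \<open>T\<close> does not increase how far a point is from the
  opposite set. Hence the points of \<open>K\<close> having a partner at distance \<open>D\<close> in \<open>L\<close>, both within \<open>r\<close>
  of the opposite set, form with their partners a smaller invariant pair, so they exhaust \<open>K\<close>
  as soon as one such point exists. With \<open>r\<close> large this shows that \<open>(K, L)\<close> is proximal; if its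
  diameter exceeded \<open>D\<close>, proximal normal structure and Busemann convexity would provide such
  points for some \<open>r\<close> below the diameter. So all pairs in \<open>K \<times> L\<close> are at distance \<open>D\<close>, among
  them \<open>(x, T x)\<close> and \<open>(T x, T (T x))\<close>.\<close>

section \<open>Geodesics and convexity\<close>

lemma geodesic_joining_nonneg: "geodesic_joining c l x y \<Longrightarrow> 0 \<le> l"
  unfolding geodesic_joining_def geodesic_path_def by simp

lemma geodesic_joining_const: "geodesic_joining (\<lambda>_. p) 0 p p"
  unfolding geodesic_joining_def geodesic_path_def by simp

lemma geodesic_spaceE:
  assumes "geodesic_space TYPE('a::metric_space)"
  obtains c l where "geodesic_joining c l (x::'a) y"
  using assms unfolding geodesic_space_def by blast

lemma geo_convex_geodesic_point:
  assumes "geo_convex C" "x \<in> C" "y \<in> C" "geodesic_joining c l x y" "t \<in> {0..1}"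
  shows "c (t * l) \<in> C"
proof -
  have "t * l \<in> {0..l}"
    using assms(5) geodesic_joining_nonneg[OF assms(4)] by (auto simp: mult_left_le_one_le)
  then show ?thesis using assms(1-4) unfolding geo_convex_def by blast
qed

lemma geo_convexI:
  assumes "\<And>x y c l t. x \<in> S \<Longrightarrow> y \<in> S \<Longrightarrow> geodesic_joining c l x y \<Longrightarrow> t \<in> {0..1}
             \<Longrightarrow> c (t * l) \<in> S"
  shows "geo_convex S"
  unfolding geo_convex_def
proof (intro ballI allI impI subsetI)
  fix x y c l z assume h: "x \<in> S" "y \<in> S" "geodesic_joining c l x y" "z \<in> c ` {0..l}"
  then obtain s where s: "s \<in> {0..l}" "z = c s" by auto
  show "z \<in> S"
  proof (cases "l = 0")
    case True
    then show ?thesis using assms[OF h(1-3), of 0] s by simp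
  next
    case False
    then have "s = (s / l) * l" "s / l \<in> {0..1}" using s by auto
    then show ?thesis using assms[OF h(1-3), of "s / l"] s by metis
  qed
qed

lemma geo_convex_Inter: "(\<And>S. S \<in> \<F> \<Longrightarrow> geo_convex S) \<Longrightarrow> geo_convex (\<Inter>\<F>)"
  unfolding geo_convex_def by blast

lemma geo_convex_Int: "geo_convex S \<Longrightarrow> geo_convex S' \<Longrightarrow> geo_convex (S \<inter> S')"
  unfolding geo_convex_def by blast

lemma convex_combination_le: "(a::real) \<le> r \<Longrightarrow> b \<le> r \<Longrightarrow> t \<in> {0..1} \<Longrightarrow> (1 - t) * a + t * b \<le> r"
  by (rule convex_bound_le) auto

lemma busemann_convexD:
  assumes "busemann_convex TYPE('a::metric_space)"
    and "geodesic_joining c l x x'" "geodesic_joining c' l' (y::'a) y'" "t \<in> {0..1}"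
  shows "dist (c (t * l)) (c' (t * l')) \<le> (1 - t) * dist x y + t * dist x' y'"
  using assms unfolding busemann_convex_def geodesic_joining_def by blast

lemma busemann_geodesic_point_dist:
  assumes "busemann_convex TYPE('a::metric_space)"
    and "geodesic_joining c l x x'" "t \<in> {0..1}"
  shows "dist (c (t * l)) (p::'a) \<le> (1 - t) * dist x p + t * dist x' p"
  using busemann_convexD[OF assms(1,2) geodesic_joining_const assms(3)] by simp

lemma geo_convex_cball:
  assumes "busemann_convex TYPE('a::metric_space)"
  shows "geo_convex (cball (p::'a) r)"
proof (rule geo_convexI)
  fix x y c l and t :: real
  assume h: "x \<in> cball p r" "y \<in> cball p r" "geodesic_joining c l x y" "t \<in> {0..1}"
  have "dist (c (t * l)) p \<le> (1 - t) * dist x p + t * dist y p"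
    by (rule busemann_geodesic_point_dist[OF assms h(3,4)])
  also have "\<dots> \<le> r" using h by (intro convex_combination_le) (auto simp: dist_commute)
  finally show "c (t * l) \<in> cball p r" by (simp add: dist_commute)
qed

section \<open>Reflexivity\<close>

lemma reflexive_space_INT_nonempty:
  fixes S :: "'b \<Rightarrow> 'a::metric_space set"
  assumes "reflexive_space TYPE('a)" "I \<noteq> {}"
    and "\<And>i. i \<in> I \<Longrightarrow> S i \<noteq> {} \<and> closed (S i) \<and> geo_convex (S i) \<and> bounded (S i)"
    and "\<And>i j. i \<in> I \<Longrightarrow> j \<in> I \<Longrightarrow> S i \<subseteq> S j \<or> S j \<subseteq> S i"
  shows "\<exists>x. \<forall>i\<in>I. x \<in> S i"
proof -
  have "S ` I \<noteq> {}" "\<forall>X\<in>S ` I. X \<noteq> {} \<and> closed X \<and> geo_convex X \<and> bounded X"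
    "\<forall>X\<in>S ` I. \<forall>X'\<in>S ` I. X \<subseteq> X' \<or> X' \<subseteq> X"
    using assms(2-4) by auto
  then have "\<Inter>(S ` I) \<noteq> {}"
    using assms(1)[unfolded reflexive_space_def, rule_format, of "S ` I"] by blast
  then show ?thesis by auto
qed

lemma reflexive_space_nested_nonempty:
  fixes S :: "real \<Rightarrow> 'a::metric_space set"
  assumes "reflexive_space TYPE('a)"
    and "\<And>e. e > 0 \<Longrightarrow> S e \<noteq> {} \<and> closed (S e) \<and> geo_convex (S e) \<and> bounded (S e)"
    and "\<And>e e'. 0 < e \<Longrightarrow> e \<le> e' \<Longrightarrow> S e \<subseteq> S e'"
  shows "\<exists>x. \<forall>e>0. x \<in> S e"
proof -
  have "\<exists>x. \<forall>e\<in>{0<..}. x \<in> S e"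
  proof (rule reflexive_space_INT_nonempty[OF assms(1)])
    show "{0<..} \<noteq> ({} :: real set)" using zero_less_one greaterThan_iff by blast
  next
    fix e :: real assume "e \<in> {0<..}"
    then show "S e \<noteq> {} \<and> closed (S e) \<and> geo_convex (S e) \<and> bounded (S e)" using assms(2) by simp
  next
    fix e e' :: real assume "e \<in> {0<..}" "e' \<in> {0<..}"
    then show "S e \<subseteq> S e' \<or> S e' \<subseteq> S e" using assms(3) by (cases "e \<le> e'") auto
  qed
  then show ?thesis by auto
qed

lemma reflexive_space_dist_attained:
  fixes F :: "'a::metric_space set"
  assumes "reflexive_space TYPE('a)" "busemann_convex TYPE('a)"
    and "closed F" "geo_convex F"
    and approx: "\<And>e. e > 0 \<Longrightarrow> \<exists>y\<in>F. dist x y < R + e"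
  shows "\<exists>y\<in>F. dist x y \<le> R"
proof -
  have "\<exists>y. \<forall>e>0. y \<in> F \<inter> cball x (R + e)"
  proof (rule reflexive_space_nested_nonempty[OF assms(1)])
    fix e :: real assume "e > 0"
    then obtain y where "y \<in> F" "dist x y < R + e" using approx by blast
    then have "F \<inter> cball x (R + e) \<noteq> {}" by auto
    then show "F \<inter> cball x (R + e) \<noteq> {} \<and> closed (F \<inter> cball x (R + e)) \<and>
        geo_convex (F \<inter> cball x (R + e)) \<and> bounded (F \<inter> cball x (R + e))"
      using assms(3,4) geo_convex_cball[OF assms(2)]
      by (auto intro!: geo_convex_Int closed_Int bounded_Int)
  qed auto
  then obtain y where y: "\<And>e. e > 0 \<Longrightarrow> y \<in> F \<inter> cball x (R + e)" by blast
  have "dist x y \<le> R"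
    by (rule field_le_epsilon) (use y in auto)
  then show ?thesis using y[of 1] by auto
qed

section \<open>Attainment of the distance between convex sets\<close>

lemma geo_convex_setdist_sublevel:
  fixes A B :: "'a::metric_space set"
  assumes "busemann_convex TYPE('a)" "geodesic_space TYPE('a)"
    and "geo_convex A" "geo_convex B" "B \<noteq> {}"
  shows "geo_convex {x\<in>A. setdist {x} B \<le> s}"
proof (rule geo_convexI)
  fix x x' c l and t :: real
  assume h: "x \<in> {x\<in>A. setdist {x} B \<le> s}" "x' \<in> {x\<in>A. setdist {x} B \<le> s}"
    "geodesic_joining c l x x'" "t \<in> {0..1}"
  have "setdist {c (t * l)} B \<le> s + e" if "e > 0" for e
  proof -
    have "setdist {x} B < s + e" "setdist {x'} B < s + e" using h(1,2) \<open>e > 0\<close> by auto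
    then obtain y y' where y: "y \<in> B" "dist x y < s + e" and y': "y' \<in> B" "dist x' y' < s + e"
      using setdist_ltE[of "{x}" B] setdist_ltE[of "{x'}" B] assms(5) by (metis insert_not_empty singletonD)
    obtain c' l' where g': "geodesic_joining c' l' y y'" using geodesic_spaceE[OF assms(2)] .
    have "c' (t * l') \<in> B" by (rule geo_convex_geodesic_point[OF assms(4) y(1) y'(1) g' h(4)])
    then have "setdist {c (t * l)} B \<le> dist (c (t * l)) (c' (t * l'))"
      by (intro setdist_le_dist) auto
    also have "\<dots> \<le> (1 - t) * dist x y + t * dist x' y'"
      by (rule busemann_convexD[OF assms(1) h(3) g' h(4)])
    also have "\<dots> \<le> s + e" using y y' h(4) by (intro convex_combination_le) auto
    finally show ?thesis .
  qed
  then have "setdist {c (t * l)} B \<le> s" by (rule field_le_epsilon)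
  moreover have "c (t * l) \<in> A" using geo_convex_geodesic_point[OF assms(3) _ _ h(3,4)] h(1,2) by blast
  ultimately show "c (t * l) \<in> {x\<in>A. setdist {x} B \<le> s}" by simp
qed

text \<open>Reflexivity makes the decreasing sublevel sets of the distance to \<open>B\<close> in \<open>A\<close> meet; a point
  of the intersection then has a nearest point in \<open>B\<close>.\<close>
lemma setdist_attained:
  fixes A B :: "'a::metric_space set"
  assumes "reflexive_space TYPE('a)" "busemann_convex TYPE('a)" "geodesic_space TYPE('a)"
    and "A \<noteq> {}" "B \<noteq> {}" "closed A" "closed B" "geo_convex A" "geo_convex B" "bounded A"
  shows "\<exists>x\<in>A. \<exists>y\<in>B. dist x y = setdist A B"
proof -
  let ?S = "\<lambda>e. {x\<in>A. setdist {x} B \<le> setdist A B + e}"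
  have "\<exists>x. \<forall>e>0. x \<in> ?S e"
  proof (rule reflexive_space_nested_nonempty[OF assms(1)])
    fix e :: real assume "e > 0"
    then obtain x y where "x \<in> A" "y \<in> B" "dist x y < setdist A B + e"
      using setdist_ltE[of A B "setdist A B + e"] assms(4,5) by auto
    moreover have "setdist {x} B \<le> dist x y" using \<open>y \<in> B\<close> by (intro setdist_le_dist) auto
    ultimately have ne: "?S e \<noteq> {}" by fastforce
    have "closed {x. setdist {x} B \<le> setdist A B + e}"
      by (rule closed_Collect_le) (auto intro: continuous_on_setdist continuous_on_const)
    moreover have "?S e = A \<inter> {x. setdist {x} B \<le> setdist A B + e}" by blast
    ultimately have "closed (?S e)" using closed_Int[OF assms(6)] by simp
    then show "?S e \<noteq> {} \<and> closed (?S e) \<and> geo_convex (?S e) \<and> bounded (?S e)"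
      using ne geo_convex_setdist_sublevel[OF assms(2,3,8,9,5)] bounded_subset[OF assms(10)] by auto
  qed auto
  then obtain x where x: "\<And>e. e > 0 \<Longrightarrow> x \<in> ?S e" by blast
  have "\<exists>y\<in>B. dist x y \<le> setdist A B"
  proof (rule reflexive_space_dist_attained[OF assms(1,2,7,9)])
    fix e :: real assume "e > 0"
    then have "setdist {x} B < setdist A B + e" using x[of "e / 2"] by auto
    then show "\<exists>y\<in>B. dist x y < setdist A B + e"
      using setdist_ltE[of "{x}" B] assms(5) by blast
  qed
  then obtain y where "y \<in> B" "dist x y \<le> setdist A B" by blast
  moreover have "x \<in> A" using x[of 1] by simp
  ultimately show ?thesis using setdist_le_dist[of x A y B] by fastforce
qed

section \<open>Proximal cores\<close>

definition proximal_core :: "'a::metric_space set \<Rightarrow> 'a set \<Rightarrow> real \<Rightarrow> real \<Rightarrow> 'a set" where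
  "proximal_core K L D r = {x\<in>K. \<exists>y\<in>L. dist x y = D \<and> L \<subseteq> cball x r \<and> K \<subseteq> cball y r}"

lemma closed_proximal_core:
  fixes K L :: "'a::metric_space set"
  assumes "reflexive_space TYPE('a)" "busemann_convex TYPE('a)"
    and "closed K" "closed L" "geo_convex L"
    and D_le: "\<And>x y. x \<in> K \<Longrightarrow> y \<in> L \<Longrightarrow> D \<le> dist x y"
  shows "closed (proximal_core K L D r)"
  unfolding closure_subset_eq[symmetric]
proof
  fix x assume x: "x \<in> closure (proximal_core K L D r)"
  then have approx: "\<And>e. e > 0 \<Longrightarrow> \<exists>z\<in>proximal_core K L D r. dist z x < e"
    using closure_approachable by blast
  have "x \<in> closure K" using x closure_mono[of "proximal_core K L D r" K]
    unfolding proximal_core_def by blast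
  then have xK: "x \<in> K" using assms(3) by simp
  have "dist x k \<le> r" if "k \<in> L" for k
  proof (rule field_le_epsilon)
    fix e :: real assume "e > 0"
    then obtain z where "z \<in> proximal_core K L D r" "dist z x < e" using approx by blast
    moreover from this(1) have "dist z k \<le> r" using that unfolding proximal_core_def by auto
    ultimately show "dist x k \<le> r + e" using dist_triangle3[of x k z] by linarith
  qed
  then have L_ball: "L \<subseteq> cball x r" by auto
  let ?F = "L \<inter> (\<Inter>k\<in>K. cball k r)"
  have "\<exists>y\<in>?F. dist x y \<le> D"
  proof (rule reflexive_space_dist_attained[OF assms(1,2)])
    show "closed ?F" using assms(4) by (intro closed_Int closed_INT) auto
    show "geo_convex ?F" using assms(5) geo_convex_cball[OF assms(2)]
      by (intro geo_convex_Int geo_convex_Inter) auto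
    fix e :: real assume "e > 0"
    then obtain z y where "z \<in> K" "dist z x < e" "y \<in> L" "dist z y = D" "K \<subseteq> cball y r"
      using approx unfolding proximal_core_def by blast
    then have "y \<in> ?F" "dist x y < D + e"
      using dist_triangle3[of x y z] by (auto simp: dist_commute)
    then show "\<exists>y\<in>?F. dist x y < D + e" by blast
  qed
  then obtain y where "y \<in> ?F" "dist x y \<le> D" by blast
  then show "x \<in> proximal_core K L D r"
    using xK L_ball D_le[OF xK, of y] unfolding proximal_core_def by (auto simp: dist_commute)
qed

lemma geo_convex_proximal_core:
  fixes K L :: "'a::metric_space set"
  assumes "busemann_convex TYPE('a)" "geodesic_space TYPE('a)"
    and "geo_convex K" "geo_convex L"
    and D_le: "\<And>x y. x \<in> K \<Longrightarrow> y \<in> L \<Longrightarrow> D \<le> dist x y"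
  shows "geo_convex (proximal_core K L D r)"
proof (rule geo_convexI)
  fix x x' c l and t :: real
  assume h: "x \<in> proximal_core K L D r" "x' \<in> proximal_core K L D r"
    "geodesic_joining c l x x'" "t \<in> {0..1}"
  obtain y y' where y: "y \<in> L" "dist x y = D" "L \<subseteq> cball x r" "K \<subseteq> cball y r"
    and y': "y' \<in> L" "dist x' y' = D" "L \<subseteq> cball x' r" "K \<subseteq> cball y' r"
    and xK: "x \<in> K" "x' \<in> K"
    using h(1,2) unfolding proximal_core_def by blast
  obtain c' l' where g': "geodesic_joining c' l' y y'" using geodesic_spaceE[OF assms(2)] .
  let ?m = "c (t * l)" and ?q = "c' (t * l')"
  have mK: "?m \<in> K" by (rule geo_convex_geodesic_point[OF assms(3) xK h(3,4)])
  have qL: "?q \<in> L" by (rule geo_convex_geodesic_point[OF assms(4) y(1) y'(1) g' h(4)])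
  have "dist ?m ?q \<le> (1 - t) * dist x y + t * dist x' y'"
    by (rule busemann_convexD[OF assms(1) h(3) g' h(4)])
  also have "\<dots> = D" using y(2) y'(2) by (simp add: algebra_simps)
  finally have "dist ?m ?q = D" using D_le[OF mK qL] by linarith
  moreover have "L \<subseteq> cball ?m r"
  proof
    fix k assume "k \<in> L"
    have "dist ?m k \<le> (1 - t) * dist x k + t * dist x' k"
      by (rule busemann_geodesic_point_dist[OF assms(1) h(3,4)])
    also have "\<dots> \<le> r" using y(3) y'(3) \<open>k \<in> L\<close> h(4) by (intro convex_combination_le) auto
    finally show "k \<in> cball ?m r" by simp
  qed
  moreover have "K \<subseteq> cball ?q r"
  proof
    fix k assume "k \<in> K"
    have "dist ?q k \<le> (1 - t) * dist y k + t * dist y' k"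
      by (rule busemann_geodesic_point_dist[OF assms(1) g' h(4)])
    also have "\<dots> \<le> r" using y(4) y'(4) \<open>k \<in> K\<close> h(4) by (intro convex_combination_le) auto
    finally show "k \<in> cball ?q r" by simp
  qed
  ultimately show "?m \<in> proximal_core K L D r" using mK qL unfolding proximal_core_def by blast
qed

text \<open>The hypotheses are symmetric in \<open>K\<close> and \<open>L\<close>, so \<open>T\<close> also maps \<open>proximal_core L K D r\<close>
  into \<open>proximal_core K L D r\<close>.\<close>
lemma proximal_core_image:
  assumes "T ` K \<subseteq> L" "T ` L \<subseteq> K"
    and nonexp: "\<And>x y. x \<in> K \<Longrightarrow> y \<in> L \<Longrightarrow> dist (T x) (T y) \<le> dist x y"
    and D_le: "\<And>x y. x \<in> K \<Longrightarrow> y \<in> L \<Longrightarrow> D \<le> dist x y"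
    and K_ball: "\<And>x \<rho>. x \<in> K \<Longrightarrow> L \<subseteq> cball x \<rho> \<Longrightarrow> K \<subseteq> cball (T x) \<rho>"
    and L_ball: "\<And>y \<rho>. y \<in> L \<Longrightarrow> K \<subseteq> cball y \<rho> \<Longrightarrow> L \<subseteq> cball (T y) \<rho>"
  shows "T ` proximal_core K L D r \<subseteq> proximal_core L K D r"
proof
  fix z assume "z \<in> T ` proximal_core K L D r"
  then obtain x y where x: "x \<in> K" "z = T x" and y: "y \<in> L" "dist x y = D"
    and balls: "L \<subseteq> cball x r" "K \<subseteq> cball y r"
    unfolding proximal_core_def by blast
  have Tx: "T x \<in> L" and Ty: "T y \<in> K" using assms(1,2) x y by auto
  have "dist (T x) (T y) = D"
    using nonexp[OF x(1) y(1)] D_le[OF Ty Tx] y(2) by (simp add: dist_commute)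
  then show "z \<in> proximal_core L K D r"
    using Tx Ty K_ball[OF x(1) balls(1)] L_ball[OF y(1) balls(2)] x(2)
    unfolding proximal_core_def by blast
qed

lemma dist_le_delta_pt:
  assumes "bounded K" "y \<in> K"
  shows "dist x y \<le> delta_pt x K"
proof -
  obtain e where "\<forall>y\<in>K. dist x y \<le> e" using assms(1) unfolding bounded_any_center[of K x] ..
  then have "bdd_above ((\<lambda>y. dist x y) ` K)" by (intro bdd_aboveI2) blast
  then show ?thesis unfolding delta_pt_def by (rule cSUP_upper[OF assms(2)])
qed

lemma dist_le_delta_set:
  assumes "bounded K" "bounded L" "x \<in> K" "y \<in> L"
  shows "dist x y \<le> delta_set K L"
proof -
  have "bounded (K \<union> L)" using assms(1,2) by simp
  then obtain R where R: "\<forall>a\<in>K \<union> L. \<forall>b\<in>K \<union> L. dist a b \<le> R"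
    unfolding bounded_two_points ..
  have "bdd_above ((\<lambda>p. dist (fst p) (snd p)) ` (K \<times> L))"
  proof (rule bdd_aboveI2)
    fix p assume "p \<in> K \<times> L"
    then have "fst p \<in> K \<union> L" "snd p \<in> K \<union> L" by (auto simp: mem_Times_iff)
    then show "dist (fst p) (snd p) \<le> R" using R by blast
  qed
  from cSUP_upper[OF _ this, of "(x, y)"] show ?thesis
    unfolding delta_set_def using assms(3,4) by simp
qed

lemma delta_set_le:
  assumes "K \<noteq> {}" "L \<noteq> {}" "\<And>x y. x \<in> K \<Longrightarrow> y \<in> L \<Longrightarrow> dist x y \<le> r"
  shows "delta_set K L \<le> r"
  unfolding delta_set_def by (rule cSUP_least) (use assms in fastforce)+

section \<open>Minimal invariant pairs\<close>

locale cyclic_relatively_nonexpansive =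
  fixes A B :: "'a::metric_space set" and T :: "'a \<Rightarrow> 'a"
  assumes reflexive: "reflexive_space TYPE('a)" and busemann: "busemann_convex TYPE('a)"
    and geodesic: "geodesic_space TYPE('a)"
    and nonempty: "A \<noteq> {}" "B \<noteq> {}" and closed: "closed A" "closed B"
    and convex: "geo_convex A" "geo_convex B" and bounded: "bounded A"
    and cyclic: "cyclic_map T A B" and nonexpansive: "relatively_nonexpansive T A B"
    and normal: "proximal_normal_structure A B"
begin

abbreviation "D \<equiv> setdist A B"

lemma dist_T_le: "x \<in> A \<Longrightarrow> y \<in> B \<Longrightarrow> dist (T x) (T y) \<le> dist x y"
  using nonexpansive unfolding relatively_nonexpansive_def by blast

lemma T_A: "x \<in> A \<Longrightarrow> T x \<in> B" and T_B: "y \<in> B \<Longrightarrow> T y \<in> A"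
  using cyclic unfolding cyclic_map_def by blast+

definition invariant_pair :: "'a set \<Rightarrow> 'a set \<Rightarrow> bool" where
  "invariant_pair E F \<longleftrightarrow> E \<subseteq> A \<and> F \<subseteq> B \<and> E \<noteq> {} \<and> F \<noteq> {} \<and> closed E \<and> closed F
     \<and> geo_convex E \<and> geo_convex F \<and> bounded E \<and> bounded F \<and> T ` E \<subseteq> F \<and> T ` F \<subseteq> E
     \<and> (\<exists>x\<in>E. \<exists>y\<in>F. dist x y = D)"

definition minimal_invariant_pair :: "'a set \<Rightarrow> 'a set \<Rightarrow> bool" where
  "minimal_invariant_pair K L \<longleftrightarrow> invariant_pair K L \<and>
     (\<forall>E F. invariant_pair E F \<longrightarrow> E \<subseteq> K \<longrightarrow> F \<subseteq> L \<longrightarrow> E = K \<and> F = L)"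

lemma invariant_pair_D_le:
  "invariant_pair K L \<Longrightarrow> x \<in> K \<Longrightarrow> y \<in> L \<Longrightarrow> D \<le> dist x y"
  unfolding invariant_pair_def using setdist_le_dist by blast

lemma invariant_pair_setdist:
  assumes "invariant_pair K L"
  shows "setdist K L = D"
proof (rule antisym)
  obtain x y where "x \<in> K" "y \<in> L" "dist x y = D"
    using assms unfolding invariant_pair_def by blast
  then show "setdist K L \<le> D" using setdist_le_dist[of x K y L] by simp
  show "D \<le> setdist K L"
    unfolding le_setdist_iff using invariant_pair_D_le[OF assms] \<open>x \<in> K\<close> \<open>y \<in> L\<close> by blast
qed

lemma invariant_pair_subpair:
  assumes "invariant_pair K L" "K' \<subseteq> K" "L' \<subseteq> L"
    and "closed K'" "closed L'" "geo_convex K'" "geo_convex L'" "T ` K' \<subseteq> L'" "T ` L' \<subseteq> K'"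
    and "x \<in> K'" "y \<in> L'" "dist x y = D"
  shows "invariant_pair K' L'"
proof -
  have "K \<subseteq> A" "L \<subseteq> B" "bounded K" "bounded L"
    using assms(1) unfolding invariant_pair_def by blast+
  then have "K' \<subseteq> A" "L' \<subseteq> B" "bounded K'" "bounded L'"
    using assms(2,3) bounded_subset by blast+
  then show ?thesis unfolding invariant_pair_def using assms(4-12) by blast
qed

text \<open>\<open>B\<close> may be unbounded, but \<open>T\<close> maps the bounded set \<open>A\<close> into a ball around a point of \<open>B\<close>.\<close>
lemma invariant_pair_exists: "\<exists>E F. invariant_pair E F"
proof -
  obtain x0 y0 where xy0: "x0 \<in> A" "y0 \<in> B" "dist x0 y0 = D"
    using setdist_attained[OF reflexive busemann geodesic nonempty closed convex bounded] by blast
  obtain e where e: "\<And>x. x \<in> A \<Longrightarrow> dist x0 x \<le> e" using bounded bounded_any_center by blast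
  define R where "R = dist y0 (T y0) + e + dist x0 y0"
  let ?F = "B \<inter> cball y0 R"
  have "T ` A \<subseteq> ?F"
  proof
    fix z assume "z \<in> T ` A"
    then obtain x where x: "x \<in> A" "z = T x" by blast
    have "dist y0 (T x) \<le> dist y0 (T y0) + dist (T y0) (T x)" by (rule dist_triangle)
    also have "\<dots> \<le> dist y0 (T y0) + dist x y0"
      using dist_T_le[OF x(1) xy0(2)] by (simp add: dist_commute)
    also have "\<dots> \<le> R"
      unfolding R_def using dist_triangle3[of x y0 x0] e[OF x(1)] by linarith
    finally show "z \<in> ?F" using x T_A by simp
  qed
  moreover have "y0 \<in> ?F" using xy0(2) e[OF xy0(1)] unfolding R_def by simp
  then have "\<exists>x\<in>A. \<exists>y\<in>?F. dist x y = D" using xy0(1,3) by blast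
  ultimately have "invariant_pair A ?F"
    unfolding invariant_pair_def using nonempty closed convex bounded T_B
      geo_convex_cball[OF busemann, of y0 R]
    by (auto intro!: geo_convex_Int closed_Int bounded_Int)
  then show ?thesis by blast
qed

lemma invariant_pair_proximal_part:
  assumes "invariant_pair E F"
  shows "closed {x\<in>E. \<exists>y\<in>F. dist x y = D}" "geo_convex {x\<in>E. \<exists>y\<in>F. dist x y = D}"
proof -
  have EF: "E \<subseteq> A" "F \<subseteq> B" "closed E" "closed F" "geo_convex E" "geo_convex F" "bounded (E \<union> F)"
    using assms unfolding invariant_pair_def by auto
  obtain \<rho> where "\<forall>x\<in>E \<union> F. \<forall>y\<in>E \<union> F. dist x y \<le> \<rho>"
    using EF(7) bounded_two_points by blast
  then have eq: "{x\<in>E. \<exists>y\<in>F. dist x y = D} = proximal_core E F D \<rho>"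
    unfolding proximal_core_def by (auto simp: subset_eq)
  note D_le = invariant_pair_D_le[OF assms]
  show "closed {x\<in>E. \<exists>y\<in>F. dist x y = D}"
    unfolding eq by (rule closed_proximal_core[OF reflexive busemann EF(3,4,6) D_le])
  show "geo_convex {x\<in>E. \<exists>y\<in>F. dist x y = D}"
    unfolding eq by (rule geo_convex_proximal_core[OF busemann geodesic EF(5,6) D_le])
qed

text \<open>The proximal parts of the pairs in a chain are nested closed convex sets, so reflexivity
  provides a common point \<open>x\<close>; a second application, to the sets \<open>snd p \<inter> cball x D\<close>, provides
  its partner.\<close>
lemma invariant_pair_chain_proximal_points:
  assumes "C \<noteq> {}" and inv: "\<And>p. p \<in> C \<Longrightarrow> invariant_pair (fst p) (snd p)"
    and chain: "\<And>p q. p \<in> C \<Longrightarrow> q \<in> C \<Longrightarrow>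
                  fst p \<subseteq> fst q \<and> snd p \<subseteq> snd q \<or> fst q \<subseteq> fst p \<and> snd q \<subseteq> snd p"
  obtains x y where "x \<in> \<Inter>(fst ` C)" "y \<in> \<Inter>(snd ` C)" "dist x y = D"
proof -
  let ?P = "\<lambda>p. {x\<in>fst p. \<exists>y\<in>snd p. dist x y = D}"
  have "\<exists>x. \<forall>p\<in>C. x \<in> ?P p"
  proof (rule reflexive_space_INT_nonempty[OF reflexive assms(1)])
    fix p assume p: "p \<in> C"
    have "?P p \<noteq> {}" "bounded (fst p)" using inv[OF p] unfolding invariant_pair_def by blast+
    moreover from this(2) have "bounded (?P p)" by (rule bounded_subset) blast
    ultimately show "?P p \<noteq> {} \<and> closed (?P p) \<and> geo_convex (?P p) \<and> bounded (?P p)"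
      using invariant_pair_proximal_part[OF inv[OF p]] by blast
  next
    fix p q assume "p \<in> C" "q \<in> C"
    then show "?P p \<subseteq> ?P q \<or> ?P q \<subseteq> ?P p" using chain[of p q] by blast
  qed
  then obtain x where x: "\<And>p. p \<in> C \<Longrightarrow> x \<in> ?P p" by blast
  have "\<exists>y. \<forall>p\<in>C. y \<in> snd p \<inter> cball x D"
  proof (rule reflexive_space_INT_nonempty[OF reflexive assms(1)])
    fix p assume p: "p \<in> C"
    then have "snd p \<inter> cball x D \<noteq> {}" using x[OF p] by auto
    then show "snd p \<inter> cball x D \<noteq> {} \<and> closed (snd p \<inter> cball x D) \<and>
        geo_convex (snd p \<inter> cball x D) \<and> bounded (snd p \<inter> cball x D)"
      using inv[OF p] geo_convex_cball[OF busemann, of x D]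
      unfolding invariant_pair_def by (auto intro!: geo_convex_Int closed_Int)
  next
    fix p q assume "p \<in> C" "q \<in> C"
    then show "snd p \<inter> cball x D \<subseteq> snd q \<inter> cball x D \<or> snd q \<inter> cball x D \<subseteq> snd p \<inter> cball x D"
      using chain[of p q] by blast
  qed
  then obtain y where y: "\<And>p. p \<in> C \<Longrightarrow> y \<in> snd p \<inter> cball x D" by blast
  obtain p0 where p0: "p0 \<in> C" using assms(1) by blast
  have "dist x y \<le> D" using y[OF p0] by (simp add: dist_commute)
  moreover have "D \<le> dist x y" using x[OF p0] y[OF p0] by (intro invariant_pair_D_le[OF inv[OF p0]]) auto
  ultimately show ?thesis using that x y by fastforce
qed

lemma invariant_pair_chain_Inter:
  assumes "C \<noteq> {}" and inv: "\<And>p. p \<in> C \<Longrightarrow> invariant_pair (fst p) (snd p)"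
    and chain: "\<And>p q. p \<in> C \<Longrightarrow> q \<in> C \<Longrightarrow>
                  fst p \<subseteq> fst q \<and> snd p \<subseteq> snd q \<or> fst q \<subseteq> fst p \<and> snd q \<subseteq> snd p"
  shows "invariant_pair (\<Inter>(fst ` C)) (\<Inter>(snd ` C))"
proof -
  let ?E = "\<Inter>(fst ` C)" and ?F = "\<Inter>(snd ` C)"
  obtain x y where xy: "x \<in> ?E" "y \<in> ?F" "dist x y = D"
    using invariant_pair_chain_proximal_points[OF assms] .
  obtain p0 where p0: "p0 \<in> C" using assms(1) by blast
  have sub: "?E \<subseteq> fst p0" "?F \<subseteq> snd p0" using p0 by blast+
  have props: "closed (fst p) \<and> closed (snd p) \<and> geo_convex (fst p) \<and> geo_convex (snd p) \<and>
      T ` fst p \<subseteq> snd p \<and> T ` snd p \<subseteq> fst p" if "p \<in> C" for p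
    using inv[OF that] unfolding invariant_pair_def by blast
  have "closed ?E" "closed ?F" using props by (blast intro: closed_Inter)+
  moreover have "geo_convex ?E" "geo_convex ?F" using props by (blast intro: geo_convex_Inter)+
  moreover have "T ` ?E \<subseteq> ?F" "T ` ?F \<subseteq> ?E" using props by blast+
  ultimately show ?thesis by (intro invariant_pair_subpair[OF inv[OF p0] sub _ _ _ _ _ _ xy])
qed

lemma minimal_invariant_pair_exists: "\<exists>K L. minimal_invariant_pair K L"
proof -
  let ?S = "{p. invariant_pair (fst p) (snd p)}"
  let ?P = "\<lambda>p q. fst q \<subseteq> fst p \<and> snd q \<subseteq> snd p"
  have "\<exists>m\<in>?S. \<forall>p\<in>?S. ?P m p \<longrightarrow> p = m"
  proof (rule predicate_Zorn)
    show "partial_order_on ?S (relation_of ?P ?S)"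
      by (rule partial_order_on_relation_ofI) (auto simp: prod_eq_iff)
  next
    fix C assume C: "C \<in> Chains (relation_of ?P ?S)"
    show "\<exists>u\<in>?S. \<forall>p\<in>C. ?P p u"
    proof (cases "C = {}")
      case True
      then show ?thesis using invariant_pair_exists by auto
    next
      case False
      have "C \<subseteq> ?S" "\<And>p q. p \<in> C \<Longrightarrow> q \<in> C \<Longrightarrow> ?P p q \<or> ?P q p"
        using C unfolding Chains_def relation_of_def by auto
      then have "invariant_pair (\<Inter>(fst ` C)) (\<Inter>(snd ` C))"
        by (intro invariant_pair_chain_Inter[OF False]) blast+
      then show ?thesis by (intro bexI[of _ "(\<Inter>(fst ` C), \<Inter>(snd ` C))"]) auto
    qed
  qed
  then show ?thesis unfolding minimal_invariant_pair_def by fastforce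
qed

text \<open>Intersecting \<open>K\<close> with \<open>C\<close> leaves an invariant pair: the images of a pair at distance \<open>D\<close>
  in \<open>K \<times> L\<close> are again at distance \<open>D\<close>, and \<open>T y\<close> lies in \<open>K \<inter> C\<close>.\<close>
lemma minimal_invariant_pair_subset:
  assumes "minimal_invariant_pair K L" "closed C" "geo_convex C"
  shows "T ` L \<subseteq> C \<Longrightarrow> K \<subseteq> C" and "T ` K \<subseteq> C \<Longrightarrow> L \<subseteq> C"
proof -
  have inv: "invariant_pair K L" using assms(1) unfolding minimal_invariant_pair_def by blast
  then obtain x y where xy: "x \<in> K" "y \<in> L" "dist x y = D" "x \<in> A" "y \<in> B"
    unfolding invariant_pair_def by blast
  have KL: "closed K" "closed L" "geo_convex K" "geo_convex L" "T ` K \<subseteq> L" "T ` L \<subseteq> K"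
    using inv unfolding invariant_pair_def by blast+
  have Tx: "T x \<in> L" and Ty: "T y \<in> K" using xy(1,2) KL(5,6) by blast+
  then have "dist (T y) (T x) = D"
    using dist_T_le[OF xy(4,5)] invariant_pair_D_le[OF inv Ty Tx] xy(3) by (simp add: dist_commute)
  note TxTy = Tx Ty this
  show "K \<subseteq> C" if "T ` L \<subseteq> C"
  proof -
    have "invariant_pair (K \<inter> C) L"
      using invariant_pair_subpair[OF inv _ _ closed_Int[OF KL(1) assms(2)] KL(2)
          geo_convex_Int[OF KL(3) assms(3)] KL(4) _ _ _ TxTy(1,3)] that KL(5,6) TxTy(2) xy(2)
      by blast
    then show ?thesis using assms(1) unfolding minimal_invariant_pair_def by blast
  qed
  show "L \<subseteq> C" if "T ` K \<subseteq> C"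
  proof -
    have "invariant_pair K (L \<inter> C)"
      using invariant_pair_subpair[OF inv _ _ KL(1) closed_Int[OF KL(2) assms(2)]
          KL(3) geo_convex_Int[OF KL(4) assms(3)] _ _ TxTy(2) _ TxTy(3)] that KL(5,6) TxTy(1) xy(1)
      by blast
    then show ?thesis using assms(1) unfolding minimal_invariant_pair_def by blast
  qed
qed

lemma minimal_invariant_pair_cball:
  assumes "minimal_invariant_pair K L"
  shows "x \<in> K \<Longrightarrow> L \<subseteq> cball x \<rho> \<Longrightarrow> K \<subseteq> cball (T x) \<rho>"
    and "y \<in> L \<Longrightarrow> K \<subseteq> cball y \<rho> \<Longrightarrow> L \<subseteq> cball (T y) \<rho>"
proof -
  have KL: "K \<subseteq> A" "L \<subseteq> B" using assms unfolding minimal_invariant_pair_def invariant_pair_def by auto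
  note subset = minimal_invariant_pair_subset[OF assms closed_cball geo_convex_cball[OF busemann]]
  show "K \<subseteq> cball (T x) \<rho>" if "x \<in> K" "L \<subseteq> cball x \<rho>"
  proof (rule subset(1), rule image_subsetI)
    fix k assume "k \<in> L"
    then have "dist (T x) (T k) \<le> dist x k" "dist x k \<le> \<rho>"
      using that KL dist_T_le[of x k] by auto
    then show "T k \<in> cball (T x) \<rho>" by simp
  qed
  show "L \<subseteq> cball (T y) \<rho>" if "y \<in> L" "K \<subseteq> cball y \<rho>"
  proof (rule subset(2), rule image_subsetI)
    fix k assume "k \<in> K"
    then have "dist (T k) (T y) \<le> dist k y" "dist y k \<le> \<rho>"
      using that KL dist_T_le[of k y] by auto
    then show "T k \<in> cball (T y) \<rho>" by (simp add: dist_commute)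
  qed
qed

lemma minimal_invariant_pair_proximal_core:
  assumes min: "minimal_invariant_pair K L"
    and "x \<in> K" "y \<in> L" "dist x y = D" "L \<subseteq> cball x r" "K \<subseteq> cball y r"
  shows "proximal_core K L D r = K" "proximal_core L K D r = L"
proof -
  have inv: "invariant_pair K L" using min unfolding minimal_invariant_pair_def by blast
  then have KL: "K \<subseteq> A" "L \<subseteq> B" "closed K" "closed L" "geo_convex K" "geo_convex L"
      "T ` K \<subseteq> L" "T ` L \<subseteq> K"
    unfolding invariant_pair_def by auto
  have D_le: "\<And>x y. x \<in> K \<Longrightarrow> y \<in> L \<Longrightarrow> D \<le> dist x y"
    and D_le': "\<And>x y. x \<in> L \<Longrightarrow> y \<in> K \<Longrightarrow> D \<le> dist x y"
    using invariant_pair_D_le[OF inv] by (metis dist_commute)+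
  have nonexp: "\<And>x y. x \<in> K \<Longrightarrow> y \<in> L \<Longrightarrow> dist (T x) (T y) \<le> dist x y"
    and nonexp': "\<And>x y. x \<in> L \<Longrightarrow> y \<in> K \<Longrightarrow> dist (T x) (T y) \<le> dist x y"
    using KL(1,2) dist_T_le by (metis dist_commute subsetD)+
  note balls = minimal_invariant_pair_cball[OF min]
  have "invariant_pair (proximal_core K L D r) (proximal_core L K D r)"
  proof (rule invariant_pair_subpair[OF inv])
    show "proximal_core K L D r \<subseteq> K" "proximal_core L K D r \<subseteq> L"
      unfolding proximal_core_def by blast+
    show "closed (proximal_core K L D r)" "closed (proximal_core L K D r)"
      using closed_proximal_core[OF reflexive busemann] KL D_le D_le' by blast+
    show "geo_convex (proximal_core K L D r)" "geo_convex (proximal_core L K D r)"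
      using geo_convex_proximal_core[OF busemann geodesic] KL D_le D_le' by blast+
    show "T ` proximal_core K L D r \<subseteq> proximal_core L K D r"
      by (rule proximal_core_image[OF KL(7,8) nonexp D_le balls])
    show "T ` proximal_core L K D r \<subseteq> proximal_core K L D r"
      by (rule proximal_core_image[OF KL(8,7) nonexp' D_le' balls(2,1)])
    show "x \<in> proximal_core K L D r" "y \<in> proximal_core L K D r" "dist x y = D"
      using assms(2-6) unfolding proximal_core_def by (auto simp: dist_commute)
  qed
  moreover have "proximal_core K L D r \<subseteq> K" "proximal_core L K D r \<subseteq> L"
    unfolding proximal_core_def by blast+
  ultimately show "proximal_core K L D r = K" "proximal_core L K D r = L"
    using min unfolding minimal_invariant_pair_def by blast+
qed

lemma minimal_invariant_pair_proximal:
  assumes "minimal_invariant_pair K L"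
  shows "proximal_pair K L"
proof -
  have inv: "invariant_pair K L" using assms unfolding minimal_invariant_pair_def by blast
  then obtain x y where xy: "x \<in> K" "y \<in> L" "dist x y = D" unfolding invariant_pair_def by blast
  have "bounded (K \<union> L)" using inv unfolding invariant_pair_def by simp
  then obtain R where "\<forall>a\<in>K \<union> L. \<forall>b\<in>K \<union> L. dist a b \<le> R" unfolding bounded_two_points ..
  then have "L \<subseteq> cball x R" "K \<subseteq> cball y R" using xy(1,2) by auto
  note core = minimal_invariant_pair_proximal_core[OF assms xy this]
  show ?thesis
    unfolding proximal_pair_def invariant_pair_setdist[OF inv]
  proof (intro ballI)
    fix a b assume "a \<in> K" "b \<in> L"
    then have "a \<in> proximal_core K L D R" "b \<in> proximal_core L K D R" using core by simp_all
    then obtain a' b' where "b' \<in> L" "dist a b' = D" "a' \<in> K" "dist b a' = D"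
      unfolding proximal_core_def by blast
    then show "\<exists>a'\<in>K. \<exists>b'\<in>L. dist a b' = D \<and> dist a' b = D" by (auto simp: dist_commute)
  qed
qed

text \<open>\<open>m\<close> is the midpoint of \<open>x1\<close> and a partner of \<open>x2\<close>, \<open>q\<close> the midpoint of \<open>x2\<close> and a partner
  of \<open>x1\<close>.\<close>
lemma minimal_invariant_pair_midpoints:
  assumes min: "minimal_invariant_pair K L"
    and x12: "x1 \<in> K" "x2 \<in> L" "L \<subseteq> cball x1 r" "K \<subseteq> cball x2 r"
  obtains m q where "m \<in> K" "q \<in> L" "dist m q = D"
    "L \<subseteq> cball m ((r + delta_set K L) / 2)" "K \<subseteq> cball q ((r + delta_set K L) / 2)"
proof -
  let ?\<delta> = "delta_set K L" and ?r = "(r + delta_set K L) / 2"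
  have inv: "invariant_pair K L" using min unfolding minimal_invariant_pair_def by blast
  then have KL: "K \<noteq> {}" "L \<noteq> {}" "geo_convex K" "geo_convex L" "bounded K" "bounded L"
    unfolding invariant_pair_def by auto
  have delta: "\<And>a b. a \<in> K \<Longrightarrow> b \<in> L \<Longrightarrow> dist a b \<le> ?\<delta>"
    using dist_le_delta_set[OF KL(5,6)] .
  have "\<exists>a'\<in>K. \<exists>b'\<in>L. dist x1 b' = D \<and> dist a' x2 = D"
    using minimal_invariant_pair_proximal[OF min] x12(1,2)
    unfolding proximal_pair_def invariant_pair_setdist[OF inv] by blast
  then obtain y1 x2' where y1: "y1 \<in> L" "dist x1 y1 = D" and x2': "x2' \<in> K" "dist x2' x2 = D"
    by blast
  obtain c l where c: "geodesic_joining c l x1 x2'" using geodesic_spaceE[OF geodesic] .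
  obtain c' l' where c': "geodesic_joining c' l' y1 x2" using geodesic_spaceE[OF geodesic] .
  have half: "1/2 \<in> {0..1::real}" by simp
  define m q where "m = c (1/2 * l)" and "q = c' (1/2 * l')"
  have mK: "m \<in> K" unfolding m_def by (rule geo_convex_geodesic_point[OF KL(3) x12(1) x2'(1) c half])
  have qL: "q \<in> L" unfolding q_def by (rule geo_convex_geodesic_point[OF KL(4) y1(1) x12(2) c' half])
  have "dist m q \<le> (1 - 1/2) * dist x1 y1 + 1/2 * dist x2' x2"
    unfolding m_def q_def by (rule busemann_convexD[OF busemann c c' half])
  then have "dist m q = D" using y1(2) x2'(2) invariant_pair_D_le[OF inv mK qL] by simp
  moreover have "L \<subseteq> cball m ?r"
  proof
    fix k assume k: "k \<in> L"
    have "dist m k \<le> (1 - 1/2) * dist x1 k + 1/2 * dist x2' k"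
      unfolding m_def by (rule busemann_geodesic_point_dist[OF busemann c half])
    moreover have "dist x1 k \<le> r" using x12(3) k by auto
    ultimately show "k \<in> cball m ?r" using delta[OF x2'(1) k] by simp
  qed
  moreover have "K \<subseteq> cball q ?r"
  proof
    fix k assume k: "k \<in> K"
    have "dist q k \<le> (1 - 1/2) * dist y1 k + 1/2 * dist x2 k"
      unfolding q_def by (rule busemann_geodesic_point_dist[OF busemann c' half])
    moreover have "dist x2 k \<le> r" using x12(4) k by (auto simp: dist_commute)
    moreover have "dist y1 k \<le> ?\<delta>" using delta[OF k y1(1)] by (simp add: dist_commute)
    ultimately show "k \<in> cball q ?r" by simp
  qed
  ultimately show ?thesis using that mK qL by blast
qed

lemma minimal_invariant_pair_delta_set_le_mean:
  assumes min: "minimal_invariant_pair K L"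
    and x12: "x1 \<in> K" "x2 \<in> L" "L \<subseteq> cball x1 r" "K \<subseteq> cball x2 r"
  shows "delta_set K L \<le> (r + delta_set K L) / 2"
proof -
  let ?r = "(r + delta_set K L) / 2"
  obtain m q where "m \<in> K" "q \<in> L" "dist m q = D" "L \<subseteq> cball m ?r" "K \<subseteq> cball q ?r"
    using minimal_invariant_pair_midpoints[OF assms] .
  then have core: "proximal_core K L D ?r = K"
    by (rule minimal_invariant_pair_proximal_core(1)[OF min])
  have "K \<noteq> {}" "L \<noteq> {}"
    using min unfolding minimal_invariant_pair_def invariant_pair_def by blast+
  then show ?thesis
  proof (rule delta_set_le)
    fix a b assume "a \<in> K" "b \<in> L"
    then have "L \<subseteq> cball a ?r" using core unfolding proximal_core_def by blast
    then show "dist a b \<le> ?r" using \<open>b \<in> L\<close> by auto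
  qed
qed

lemma minimal_invariant_pair_delta_set_le:
  assumes min: "minimal_invariant_pair K L"
  shows "delta_set K L \<le> D"
proof (rule ccontr)
  assume "\<not> delta_set K L \<le> D"
  have inv: "invariant_pair K L" using min unfolding minimal_invariant_pair_def by blast
  then have KL: "K \<noteq> {}" "L \<noteq> {}" "closed K" "closed L" "geo_convex K" "geo_convex L"
    "bounded K" "bounded L" "K \<subseteq> A" "L \<subseteq> B"
    unfolding invariant_pair_def by auto
  have "\<exists>x1\<in>K. \<exists>x2\<in>L. delta_pt x1 L < delta_set K L \<and> delta_pt x2 K < delta_set K L"
    using normal[unfolded proximal_normal_structure_def, rule_format, of K L] KL
      minimal_invariant_pair_proximal[OF min] invariant_pair_setdist[OF inv] \<open>\<not> delta_set K L \<le> D\<close>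
    by simp
  then obtain x1 x2 where x12: "x1 \<in> K" "x2 \<in> L"
    "delta_pt x1 L < delta_set K L" "delta_pt x2 K < delta_set K L"
    by blast
  let ?r = "max (delta_pt x1 L) (delta_pt x2 K)"
  have "L \<subseteq> cball x1 ?r" "K \<subseteq> cball x2 ?r"
    using dist_le_delta_pt[OF KL(8), of _ x1] dist_le_delta_pt[OF KL(7), of _ x2]
    by (auto simp: subset_eq max.coboundedI1 max.coboundedI2)
  from minimal_invariant_pair_delta_set_le_mean[OF min x12(1,2) this]
  show False using x12(3,4) by (simp add: max_def split: if_splits)
qed

theorem best_proximity_points_exist:
  "\<exists>x\<in>A. \<exists>y\<in>B. dist x (T x) = D \<and> dist y (T y) = D"
proof -
  obtain K L where min: "minimal_invariant_pair K L"
    using minimal_invariant_pair_exists by blast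
  then have inv: "invariant_pair K L" unfolding minimal_invariant_pair_def by blast
  then obtain x where x: "x \<in> K" and KL: "K \<subseteq> A" "L \<subseteq> B" "bounded K" "bounded L"
    "T ` K \<subseteq> L" "T ` L \<subseteq> K"
    unfolding invariant_pair_def by blast
  have "dist a b = D" if "a \<in> K" "b \<in> L" for a b
    using invariant_pair_D_le[OF inv that] dist_le_delta_set[OF KL(3,4) that]
      minimal_invariant_pair_delta_set_le[OF min] by linarith
  moreover have "T x \<in> L" "T (T x) \<in> K" using x KL(5,6) by blast+
  ultimately have "dist x (T x) = D" "dist (T x) (T (T x)) = D"
    using x by (metis dist_commute)+
  then show ?thesis using x KL by blast
qed

end

theorem mainTheorem2:
  fixes A B :: "'a::metric_space set" and T :: "'a \<Rightarrow> 'a"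
  assumes "reflexive_space TYPE('a)" and "busemann_convex TYPE('a)"
    and "geodesic_space TYPE('a)"
    and "A \<noteq> {}" "B \<noteq> {}" "closed A" "closed B" "geo_convex A" "geo_convex B"
    and "bounded A"
    and "cyclic_map T A B" and "relatively_nonexpansive T A B"
    and "proximal_normal_structure A B"
  shows "\<exists>x\<in>A. \<exists>y\<in>B. dist x (T x) = setdist A B \<and> dist y (T y) = setdist A B"
proof -
  interpret cyclic_relatively_nonexpansive A B T using assms by unfold_locales
  show ?thesis by (rule best_proximity_points_exist)
qed

end
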